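(* Let $p\in(0,1]$ and write points of $(0,p)^3$ as $(p_{11},p_{10},p_{01})$. Define $$\mathcal{F}_a(p)=\{(p_{11},p_{10},p_{01})\in(0,p)^3:\ \max(p_{10}+p_{01}-p,0)\le p_{11}\le p_{10}+p_{01}\},$$ $$\mathcal{F}_m(p)=\{(p_{11},p_{10},p_{01})\in(0,p)^3:\ p_{01}\le p_{11}p/p_{10}\},$$ $$\mathcal{F}_o(p)=\Big\{(p_{11},p_{10},p_{01})\in(0,p)^3:\ \frac{(1-p)p_{10}p_{01}}{(1-p)p_{10}p_{01}+p(1-p_{10})(1-p_{01})}<p_{11}\Big\},$$ and let $F_a(p),F_m(p),F_o(p)$ denote their three-dimensional Lebesgue volumes. Then $F_a(p)=\tfrac23 p^3$ and $F_m(p)=\tfrac34 p^3$, and the values of $F_o(p)/p^3$, rounded to two decimal places, are $$\begin{array}{c|cccccccccc} p&0.1&0.2&0.3&0.4&0.5&0.6&0.7&0.8&0.9&1\\\hline F_o(p)/p^3&0.75&0.76&0.76&0.77&0.77&0.78&0.79&0.81&0.85&1.00\end{array}$$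
   Context: Here $p_{ge}=P(Y=1\mid G=g,E=e)$ for binary $G,E,Y$; the sets $\mathcal{F}_a(p),\mathcal{F}_m(p),\mathcal{F}_o(p)$ are the sets of $(p_{11},p_{10},p_{01})$ for which the fourth probability $p_{00}$ determined by no interaction on the risk difference scale ($p_{00}=p_{10}+p_{01}-p_{11}$), risk ratio scale ($p_{00}=p_{10}p_{01}/p_{11}$), or odds ratio scale ($\frac{p_{00}}{1-p_{00}}=\frac{p_{10}}{1-p_{10}}\frac{p_{01}}{1-p_{01}}\big/\frac{p_{11}}{1-p_{11}}$), respectively, lies in the allowed range. For $p=1$, $\mathcal{F}_o(1)=(0,1)^3$. *)

theory Defs
  imports "HOL-Analysis.Analysis"
begin

definition cube :: "real \<Rightarrow> (real \<times> real \<times> real) set" where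
  "cube p = {0<..<p} \<times> {0<..<p} \<times> {0<..<p}"

definition Fa_set :: "real \<Rightarrow> (real \<times> real \<times> real) set" where
  "Fa_set p = {(p11, p10, p01). (p11, p10, p01) \<in> cube p \<and>
      max (p10 + p01 - p) 0 \<le> p11 \<and> p11 \<le> p10 + p01}"

definition Fm_set :: "real \<Rightarrow> (real \<times> real \<times> real) set" where
  "Fm_set p = {(p11, p10, p01). (p11, p10, p01) \<in> cube p \<and>
      p01 \<le> p11 * p / p10}"

definition Fo_set :: "real \<Rightarrow> (real \<times> real \<times> real) set" where
  "Fo_set p = {(p11, p10, p01). (p11, p10, p01) \<in> cube p \<and>
      (1 - p) * p10 * p01 / ((1 - p) * p10 * p01 + p * (1 - p10) * (1 - p01)) < p11}"

definition Fa :: "real \<Rightarrow> real" where "Fa p = measure lebesgue (Fa_set p)"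
definition Fm :: "real \<Rightarrow> real" where "Fm p = measure lebesgue (Fm_set p)"
definition Fo :: "real \<Rightarrow> real" where "Fo p = measure lebesgue (Fo_set p)"

definition rounds_to :: "real \<Rightarrow> int \<Rightarrow> bool" where
  "rounds_to x k \<longleftrightarrow> round (100 * x) = k"

end

theory Submission
  imports Defs
begin

(*
  Each volume is the integral over the square (0,p)^2 of (p10, p01) of the length of the
  section in the p11 direction, which is an interval. On the additive and multiplicative
  scales the integrands are piecewise polynomial. On the odds-ratio scale the section is the
  interval above (1-p) p10 p01 / ((1-p) p10 p01 + p (1-p10) (1-p01)), and integrating twice
  gives, with Li_2 the dilogarithm,

    F_o(p) = p^3 - (1-p) p (3p + 2 ln(1-p) + (2p-1) (Li_2(p) + ln(1-p)^2 / 2)).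

  The table follows by enclosing ln(1-p) and Li_2(p) between a partial sum of their power
  series and that partial sum plus a geometric bound on the tail.
*)

definition dilog :: "real \<Rightarrow> real" where
  "dilog x = (\<Sum>n. x ^ Suc n / (real (Suc n))\<^sup>2)"

(* -ln (1 - x) / x, extended continuously by 1 at 0 *)
definition dilog_deriv :: "real \<Rightarrow> real" where
  "dilog_deriv x = (\<Sum>n. x ^ n / real (Suc n))"

lemma summable_dilog_deriv:
  assumes "\<bar>x\<bar> < 1"
  shows "summable (\<lambda>n. x ^ n / real (Suc n))"
proof (rule summable_comparison_test[OF _ summable_geometric[of "\<bar>x\<bar>"]])
  show "\<exists>N. \<forall>n\<ge>N. norm (x ^ n / real (Suc n)) \<le> \<bar>x\<bar> ^ n"
    by (auto simp: power_abs abs_divide divide_le_eq mult_le_cancel_left1 simp del: of_nat_Suc)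
qed (use assms in auto)

lemma has_real_derivative_dilog:
  assumes "\<bar>x\<bar> < 1"
  shows "(dilog has_real_derivative dilog_deriv x) (at x)"
proof -
  have coeff: "1 / (real (Suc n))\<^sup>2 * real (Suc n) * y ^ n = y ^ n / real (Suc n)" for n and y :: real
    by (simp add: power2_eq_square del: of_nat_Suc)
  have "((\<lambda>x. \<Sum>n. 1 / (real (Suc n))\<^sup>2 * x ^ Suc n) has_real_derivative
        (\<Sum>n. 1 / (real (Suc n))\<^sup>2 * real (Suc n) * x ^ n)) (at x)"
  proof (rule DERIV_power_series'[where R = 1])
    fix y :: real
    assume "y \<in> {-1<..<1}"
    then show "summable (\<lambda>n. 1 / (real (Suc n))\<^sup>2 * real (Suc n) * y ^ n)"
      unfolding coeff by (intro summable_dilog_deriv) auto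
  qed (use assms in auto)
  then show ?thesis
    unfolding coeff by (simp add: dilog_def[abs_def] dilog_deriv_def)
qed

lemma has_real_derivative_dilog_comp:
  assumes "(f has_real_derivative f') (at x)" "\<bar>f x\<bar> < 1"
  shows "((\<lambda>x. dilog (f x)) has_real_derivative dilog_deriv (f x) * f') (at x)"
  using DERIV_chain2[OF has_real_derivative_dilog[OF assms(2)] assms(1)] .

lemma isCont_dilog_deriv:
  assumes "\<bar>x\<bar> < 1"
  shows "isCont dilog_deriv x"
proof -
  have "isCont (\<lambda>x. \<Sum>n. 1 / real (Suc n) * x ^ n) x"
    by (rule isCont_powser[where K = "(1 + \<bar>x\<bar>) / 2"])
       (use assms summable_dilog_deriv[of "(1 + \<bar>x\<bar>) / 2"] in auto)
  then show ?thesis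
    by (simp add: dilog_deriv_def[abs_def])
qed

lemma dilog_0 [simp]: "dilog 0 = 0"
  by (simp add: dilog_def)

lemma dilog_deriv_0 [simp]: "dilog_deriv 0 = 1"
  using powser_zero[of "\<lambda>n. 1 / real (Suc n)"] by (simp add: dilog_deriv_def)

lemma dilog_deriv_eq_ln:
  assumes "0 \<le> x" "x < 1"
  shows "x * dilog_deriv x = - ln (1 - x)"
proof -
  have "ln (1 - x) = (\<Sum>n. (-1) ^ n * (1 / real (n + 1)) * ((1 - x) - 1) ^ Suc n)"
    using assms by (intro ln_series) auto
  also have "\<dots> = (\<Sum>n. - (x * (x ^ n / real (Suc n))))"
    by (simp add: power_minus' field_simps)
  also have "\<dots> = - (\<Sum>n. x * (x ^ n / real (Suc n)))"
    by (rule suminf_minus) (use summable_mult[OF summable_dilog_deriv[of x]] assms in auto)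
  also have "(\<Sum>n. x * (x ^ n / real (Suc n))) = x * dilog_deriv x"
    unfolding dilog_deriv_def by (rule suminf_mult) (use summable_dilog_deriv[of x] assms in auto)
  finally show ?thesis
    by simp
qed

lemma suminf_bounds_geometric_tail:
  fixes f :: "nat \<Rightarrow> real"
  assumes nonneg: "\<And>n. 0 \<le> f n" and tail: "\<And>n. f (n + N) \<le> C * x ^ n"
    and "0 \<le> x" "x < 1"
  shows "sum f {..<N} \<le> suminf f" "suminf f \<le> sum f {..<N} + C / (1 - x)"
proof -
  have "summable (\<lambda>n. C * x ^ n)"
    using assms by (simp add: summable_mult)
  then have tail_summable: "summable (\<lambda>n. f (n + N))"
    by (rule summable_comparison_test') (use nonneg tail in auto)
  then have "summable f"
    by (simp add: summable_iff_shift)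
  then show "sum f {..<N} \<le> suminf f"
    using nonneg by (intro sum_le_suminf) auto
  have "suminf f = (\<Sum>n. f (n + N)) + sum f {..<N}"
    using suminf_split_initial_segment[OF \<open>summable f\<close>, of N] by simp
  also have "(\<Sum>n. f (n + N)) \<le> (\<Sum>n. C * x ^ n)"
    using tail tail_summable \<open>summable (\<lambda>n. C * x ^ n)\<close> by (intro suminf_le) auto
  also have "(\<Sum>n. C * x ^ n) = C / (1 - x)"
    using assms by (simp add: suminf_mult suminf_geometric)
  finally show "suminf f \<le> sum f {..<N} + C / (1 - x)"
    by simp
qed

lemma ln_one_minus_bounds:
  assumes "0 \<le> x" "x < 1"
  shows "- (x * ((\<Sum>n<N. x ^ n / real (Suc n)) + x ^ N / real (Suc N) / (1 - x))) \<le> ln (1 - x)"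
    and "ln (1 - x) \<le> - (x * (\<Sum>n<N. x ^ n / real (Suc n)))"
proof -
  have "x ^ (n + N) / real (Suc (n + N)) \<le> x ^ N / real (Suc N) * x ^ n" for n
    using assms by (auto simp: power_add field_simps mult_left_mono)
  note bounds = suminf_bounds_geometric_tail[of "\<lambda>n. x ^ n / real (Suc n)", OF _ this assms]
  show "- (x * ((\<Sum>n<N. x ^ n / real (Suc n)) + x ^ N / real (Suc N) / (1 - x))) \<le> ln (1 - x)"
    "ln (1 - x) \<le> - (x * (\<Sum>n<N. x ^ n / real (Suc n)))"
    using mult_left_mono[OF bounds(1), of x] mult_left_mono[OF bounds(2), of x]
      dilog_deriv_eq_ln[OF assms] assms
    by (simp_all add: dilog_deriv_def)
qed

lemma dilog_bounds:
  assumes "0 \<le> x" "x < 1"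
  shows "(\<Sum>n<N. x ^ Suc n / (real (Suc n))\<^sup>2) \<le> dilog x"
    and "dilog x \<le> (\<Sum>n<N. x ^ Suc n / (real (Suc n))\<^sup>2) + x ^ Suc N / (real (Suc N))\<^sup>2 / (1 - x)"
proof -
  have "x ^ Suc (n + N) / (real (Suc (n + N)))\<^sup>2 \<le> x ^ Suc N / (real (Suc N))\<^sup>2 * x ^ n" for n
  proof -
    have "(real (Suc N))\<^sup>2 \<le> (real (Suc (n + N)))\<^sup>2"
      by (intro power_mono) auto
    then have "x ^ Suc N * x ^ n / (real (Suc (n + N)))\<^sup>2 \<le> x ^ Suc N * x ^ n / (real (Suc N))\<^sup>2"
      using assms by (intro divide_left_mono) auto
    then show ?thesis
      by (simp add: power_add mult_ac)
  qed
  from suminf_bounds_geometric_tail[of "\<lambda>n. x ^ Suc n / (real (Suc n))\<^sup>2", OF _ this assms]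
  show "(\<Sum>n<N. x ^ Suc n / (real (Suc n))\<^sup>2) \<le> dilog x"
    "dilog x \<le> (\<Sum>n<N. x ^ Suc n / (real (Suc n))\<^sup>2) + x ^ Suc N / (real (Suc N))\<^sup>2 / (1 - x)"
    using assms by (simp_all add: dilog_def)
qed

lemma sets_borel_Collect_triple:
  fixes P :: "'a::second_countable_topology \<Rightarrow> 'b::second_countable_topology \<Rightarrow>
    'c::second_countable_topology \<Rightarrow> bool"
  assumes "Measurable.pred (borel \<Otimes>\<^sub>M borel \<Otimes>\<^sub>M borel) (\<lambda>w. P (fst w) (fst (snd w)) (snd (snd w)))"
  shows "{(x, y, z). P x y z} \<in> sets borel"
proof -
  have "{(x, y, z). P x y z} =
      {w \<in> space (borel \<Otimes>\<^sub>M borel \<Otimes>\<^sub>M borel). P (fst w) (fst (snd w)) (snd (snd w))}"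
    by (auto simp: space_pair_measure)
  also have "\<dots> \<in> sets (borel \<Otimes>\<^sub>M borel \<Otimes>\<^sub>M borel)"
    using assms by measurable
  finally show ?thesis
    by (simp only: borel_prod)
qed

lemma emeasure_lborel_triple_iterated:
  fixes S :: "(real \<times> real \<times> real) set"
  assumes S: "S \<in> sets borel"
  shows "emeasure lborel S = (\<integral>\<^sup>+y. \<integral>\<^sup>+z. emeasure lborel {x. (x, y, z) \<in> S} \<partial>lborel \<partial>lborel)"
proof -
  have S': "S \<in> sets (lborel \<Otimes>\<^sub>M (lborel :: (real \<times> real) measure))"
    using S by (subst lborel_prod) simp
  have "emeasure lborel S = emeasure (lborel \<Otimes>\<^sub>M (lborel :: (real \<times> real) measure)) S"
    by (simp add: lborel_prod)
  also have "\<dots> = (\<integral>\<^sup>+yz. emeasure lborel ((\<lambda>x. (x, yz)) -` S) \<partial>(lborel :: (real \<times> real) measure))"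
    by (rule lborel_pair.emeasure_pair_measure_alt2[OF S'])
  also have "\<dots> = (\<integral>\<^sup>+y. \<integral>\<^sup>+z. emeasure lborel ((\<lambda>x. (x, y, z)) -` S) \<partial>lborel \<partial>lborel)"
    unfolding lborel_prod[symmetric]
    by (rule lborel.nn_integral_fst[symmetric])
       (use lborel_pair.measurable_emeasure_Pair2[OF S'] in \<open>simp add: lborel_prod\<close>)
  finally show ?thesis
    by (simp add: vimage_def)
qed

lemma emeasure_lborel_between_intervals:
  fixes S :: "real set"
  assumes "l \<le> u" "{l<..<u} \<subseteq> S" "S \<subseteq> {l..u}"
  shows "emeasure lborel S = ennreal (u - l)"
proof -
  have "S = {l<..<u} \<union> (S \<inter> {l, u})"
    using assms by auto
  also have "\<dots> \<in> sets lborel"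
    by (simp, intro sets.Un borel_open borel_closed finite_imp_closed) auto
  finally have "S \<in> sets lborel" .
  then show ?thesis
    using emeasure_mono[OF assms(3), of lborel] emeasure_mono[OF assms(2), of lborel] assms
    by (auto intro: antisym)
qed

lemma measure_lebesgue_by_interval_sections:
  fixes S :: "(real \<times> real \<times> real) set" and l u :: "real \<Rightarrow> real \<Rightarrow> real"
  assumes S: "S \<in> sets borel"
    and support: "\<And>x y z. (x, y, z) \<in> S \<Longrightarrow> y \<in> {a<..<b} \<and> z \<in> {a<..<b}"
    and sections: "\<And>y z. y \<in> {a<..<b} \<Longrightarrow> z \<in> {a<..<b} \<Longrightarrow>
      l y z \<le> u y z \<and> {l y z<..<u y z} \<subseteq> {x. (x, y, z) \<in> S} \<and> {x. (x, y, z) \<in> S} \<subseteq> {l y z..u y z}"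
    and inner: "\<And>y. y \<in> {a<..<b} \<Longrightarrow> ((\<lambda>z. u y z - l y z) has_integral G y) {a..b}"
    and outer: "(G has_integral V) {a..b}"
  shows "measure lebesgue S = V"
proof -
  have section_measure: "emeasure lborel {x. (x, y, z) \<in> S} =
      ennreal (u y z - l y z) * indicator {a<..<b} z" if "y \<in> {a<..<b}" for y z
  proof (cases "z \<in> {a<..<b}")
    case True
    then show ?thesis
      using sections[OF that True] by (simp add: emeasure_lborel_between_intervals)
  next
    case False
    then have "{x. (x, y, z) \<in> S} = {}"
      using support by blast
    then show ?thesis
      using False by simp
  qed
  have inner_nonneg: "0 \<le> G y" if "y \<in> {a<..<b}" for y
    by (rule has_integral_nonneg[OF inner[OF that, unfolded has_integral_Icc_iff_Ioo]])
       (use sections that in auto)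
  have "(\<integral>\<^sup>+z. emeasure lborel {x. (x, y, z) \<in> S} \<partial>lborel) = ennreal (G y) * indicator {a<..<b} y" for y
  proof (cases "y \<in> {a<..<b}")
    case True
    then have "(\<integral>\<^sup>+z. emeasure lborel {x. (x, y, z) \<in> S} \<partial>lborel) =
        (\<integral>\<^sup>+z. ennreal (u y z - l y z) * indicator {a<..<b} z \<partial>lborel)"
      by (simp add: section_measure)
    also have "\<dots> = ennreal (G y)"
      by (rule nn_integral_has_integral_lebesgue')
         (use sections True inner[OF True, unfolded has_integral_Icc_iff_Ioo] in auto)
    finally have "(\<integral>\<^sup>+z. emeasure lborel {x. (x, y, z) \<in> S} \<partial>lborel) = ennreal (G y)" .
    then show ?thesis
      using True by simp
  next
    case False
    then have "{x. (x, y, z) \<in> S} = {}" for z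
      using support by blast
    then show ?thesis
      using False by simp
  qed
  then have "emeasure lborel S = (\<integral>\<^sup>+y. ennreal (G y) * indicator {a<..<b} y \<partial>lborel)"
    by (simp add: emeasure_lborel_triple_iterated[OF S])
  also have "\<dots> = ennreal V"
    by (rule nn_integral_has_integral_lebesgue')
       (use inner_nonneg outer[unfolded has_integral_Icc_iff_Ioo] in auto)
  finally have "emeasure lborel S = ennreal V" .
  moreover have "0 \<le> V"
    by (rule has_integral_nonneg[OF outer[unfolded has_integral_Icc_iff_Ioo]]) (use inner_nonneg in auto)
  ultimately show ?thesis
    using S by (simp add: measure_def)
qed

lemma has_integral_antiderivative:
  fixes a b :: real
  assumes "a \<le> b" "\<And>x. x \<in> {a..b} \<Longrightarrow> (F has_real_derivative f x) (at x)" "F b - F a = I"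
  shows "(f has_integral I) {a..b}"
  using assms
  by (metis fundamental_theorem_of_calculus has_field_derivative_at_within
      has_real_derivative_iff_has_vector_derivative)

lemma Fa_formula:
  assumes p: "0 < p"
  shows "Fa p = 2/3 * p ^ 3"
proof -
  define l where "l y z = max 0 (y + z - p)" for y z :: real
  define u where "u y z = min p (y + z)" for y z :: real
  have "measure lebesgue (Fa_set p) = 2/3 * p ^ 3"
  proof (rule measure_lebesgue_by_interval_sections[where l = l and u = u
        and G = "\<lambda>y. p\<^sup>2 / 2 + p * y - y\<^sup>2"])
    show "Fa_set p \<in> sets borel"
      unfolding Fa_set_def cube_def by (rule sets_borel_Collect_triple) measurable
  next
    fix y z :: real
    assume "y \<in> {0<..<p}" "z \<in> {0<..<p}"
    then show "l y z \<le> u y z \<and> {l y z<..<u y z} \<subseteq> {x. (x, y, z) \<in> Fa_set p} \<and>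
        {x. (x, y, z) \<in> Fa_set p} \<subseteq> {l y z..u y z}"
      by (auto simp: Fa_set_def cube_def l_def u_def)
  next
    fix y :: real
    assume y: "y \<in> {0<..<p}"
    have "((\<lambda>z. y + z) has_integral (y * (p - y) + (p - y)\<^sup>2 / 2)) {0..p - y}"
      by (rule has_integral_antiderivative[where F = "\<lambda>z. y * z + z\<^sup>2 / 2"])
         (use y in \<open>auto intro!: derivative_eq_intros\<close>)
    then have left: "((\<lambda>z. u y z - l y z) has_integral (y * (p - y) + (p - y)\<^sup>2 / 2)) {0..p - y}"
      by (rule has_integral_eq[rotated]) (use y in \<open>auto simp: u_def l_def\<close>)
    have "((\<lambda>z. 2 * p - y - z) has_integral (y * p - y\<^sup>2 / 2)) {p - y..p}"
      by (rule has_integral_antiderivative[where F = "\<lambda>z. (2 * p - y) * z - z\<^sup>2 / 2"])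
         (use y in \<open>auto intro!: derivative_eq_intros simp: power2_eq_square field_simps\<close>)
    then have right: "((\<lambda>z. u y z - l y z) has_integral (y * p - y\<^sup>2 / 2)) {p - y..p}"
      by (rule has_integral_eq[rotated]) (use y in \<open>auto simp: u_def l_def\<close>)
    have total: "y * (p - y) + (p - y)\<^sup>2 / 2 + (y * p - y\<^sup>2 / 2) = p\<^sup>2 / 2 + p * y - y\<^sup>2"
      by (simp add: power2_eq_square field_simps)
    have split: "0 \<le> p - y" "p - y \<le> p"
      using y by auto
    show "((\<lambda>z. u y z - l y z) has_integral (p\<^sup>2 / 2 + p * y - y\<^sup>2)) {0..p}"
      using has_integral_combine[OF split left right] unfolding total .
  next
    show "((\<lambda>y. p\<^sup>2 / 2 + p * y - y\<^sup>2) has_integral 2/3 * p ^ 3) {0..p}"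
      by (rule has_integral_antiderivative[where F = "\<lambda>y. p\<^sup>2 * y / 2 + p * y\<^sup>2 / 2 - y ^ 3 / 3"])
         (use p in \<open>auto intro!: derivative_eq_intros simp: power2_eq_square power3_eq_cube algebra_simps\<close>)
  qed (auto simp: Fa_set_def cube_def)
  then show ?thesis
    by (simp add: Fa_def)
qed

lemma Fm_formula:
  assumes p: "0 < p"
  shows "Fm p = 3/4 * p ^ 3"
proof -
  have "measure lebesgue (Fm_set p) = 3/4 * p ^ 3"
  proof (rule measure_lebesgue_by_interval_sections[where l = "\<lambda>y z. z * y / p" and u = "\<lambda>_ _. p"
        and G = "\<lambda>y. p\<^sup>2 - p * y / 2"])
    show "Fm_set p \<in> sets borel"
      unfolding Fm_set_def cube_def by (rule sets_borel_Collect_triple) measurable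
  next
    fix y z :: real
    assume yz: "y \<in> {0<..<p}" "z \<in> {0<..<p}"
    define l where "l = z * y / p"
    have "z * y < p * p"
      using yz by (intro mult_strict_mono) auto
    then have "0 < l" "l < p"
      using yz p by (simp_all add: l_def divide_less_eq)
    moreover have "(x, y, z) \<in> Fm_set p \<longleftrightarrow> 0 < x \<and> x < p \<and> l \<le> x" for x
      using yz p by (auto simp: Fm_set_def cube_def l_def field_simps)
    ultimately show "z * y / p \<le> p \<and> {z * y / p<..<p} \<subseteq> {x. (x, y, z) \<in> Fm_set p} \<and>
        {x. (x, y, z) \<in> Fm_set p} \<subseteq> {z * y / p..p}"
      unfolding l_def[symmetric] by (auto simp: subset_iff)
  next
    fix y :: real
    assume y: "y \<in> {0<..<p}"
    show "((\<lambda>z. p - z * y / p) has_integral (p\<^sup>2 - p * y / 2)) {0..p}"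
      by (rule has_integral_antiderivative[where F = "\<lambda>z. p * z - z\<^sup>2 * y / (2 * p)"])
         (use p in \<open>auto intro!: derivative_eq_intros simp: power2_eq_square field_simps\<close>)
  next
    show "((\<lambda>y. p\<^sup>2 - p * y / 2) has_integral 3/4 * p ^ 3) {0..p}"
      by (rule has_integral_antiderivative[where F = "\<lambda>y. p\<^sup>2 * y - p * y\<^sup>2 / 4"])
         (use p in \<open>auto intro!: derivative_eq_intros simp: power2_eq_square power3_eq_cube algebra_simps\<close>)
  qed (auto simp: Fm_set_def cube_def)
  then show ?thesis
    by (simp add: Fm_def)
qed

lemma Fo_1: "Fo 1 = 1"
proof -
  have "measure lebesgue (Fo_set 1) = 1"
  proof (rule measure_lebesgue_by_interval_sections[where a = 0 and b = 1
        and l = "\<lambda>_ _. 0" and u = "\<lambda>_ _. 1" and G = "\<lambda>_. 1"])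
    show "Fo_set 1 \<in> sets borel"
      unfolding Fo_set_def cube_def by (rule sets_borel_Collect_triple) measurable
    show "((\<lambda>_. 1) has_integral 1) {0..1::real}"
      using has_integral_const_real[of 1 0 1] by simp
    then show "((\<lambda>z. 1 - 0) has_integral 1) {0..1::real}"
      by simp
  qed (auto simp: Fo_set_def cube_def)
  then show ?thesis
    by (simp add: Fo_def)
qed

definition odds_threshold :: "real \<Rightarrow> real \<Rightarrow> real \<Rightarrow> real" where
  "odds_threshold p y z = (1 - p) * y * z / ((1 - p) * y * z + p * (1 - y) * (1 - z))"

definition odds_threshold_integral :: "real \<Rightarrow> real \<Rightarrow> real" where
  "odds_threshold_integral p y =
    (1 - p) * y / (p - y) * (- p + p * (1 - y) / (p - y) * (ln (1 - y) - ln (1 - p)))"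

(* An antiderivative of odds_threshold_integral p; the dilog_deriv form makes it continuous
   at y = p, where the logarithmic quotient has a removable singularity. *)
definition odds_threshold_primitive :: "real \<Rightarrow> real \<Rightarrow> real" where
  "odds_threshold_primitive p y =
    - (1 - p) * p * (2 * (p - y) - p * (1 - p) * dilog_deriv ((p - y) / (1 - y)) / (1 - y)
      - p * ln (1 - y) - (1 - y) * (ln (1 - y) - ln (1 - p))
      + (2 * p - 1) * (dilog ((p - y) / (1 - y)) + (ln (1 - y) - ln (1 - p))\<^sup>2 / 2))"

lemma odds_threshold_bounds:
  assumes p: "0 < p" "p < 1" and y: "0 < y" "y < p" and z: "0 < z" "z < p"
  shows "0 < odds_threshold p y z" "odds_threshold p y z < p"
proof -
  have denom: "0 < (1 - p) * y * z + p * (1 - y) * (1 - z)"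
    using p y z by (intro add_pos_pos) auto
  then show "0 < odds_threshold p y z"
    using p y z by (simp add: odds_threshold_def)
  have "(1 - p) * y < p * (1 - y)" "(1 - p) * z < p * (1 - z)"
    using y z by (simp_all add: algebra_simps)
  then have "((1 - p) * y) * ((1 - p) * z) < (p * (1 - y)) * (p * (1 - z))"
    by (rule mult_strict_mono) (use p y z in auto)
  then have "(1 - p) * y * z < p * ((1 - p) * y * z + p * (1 - y) * (1 - z))"
    by (simp add: algebra_simps)
  then show "odds_threshold p y z < p"
    using denom by (simp add: odds_threshold_def divide_less_eq)
qed

lemma has_integral_odds_threshold:
  assumes p: "0 < p" "p < 1" and y: "0 < y" "y < p"
  shows "(odds_threshold p y has_integral odds_threshold_integral p y) {0..p}"
proof -
  (* the denominator of odds_threshold is p (1 - y) - (p - y) z, linear in z *)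
  define F where "F z = (1 - p) * y / (p - y) * (- z - p * (1 - y) / (p - y) * ln (p * (1 - y) - (p - y) * z))"
    for z
  have pos: "0 < p * (1 - y) - (p - y) * z" if "z \<le> p" for z
  proof -
    have "(p - y) * z \<le> (p - y) * p"
      using that y by (intro mult_left_mono) auto
    moreover have "0 < p * (1 - p)"
      using p by simp
    ultimately show ?thesis
      by (simp add: algebra_simps)
  qed
  have F_deriv: "(F has_real_derivative odds_threshold p y z) (at z)" if "z \<in> {0..p}" for z
  proof -
    have d_pos: "0 < p * (1 - y) - (p - y) * z"
      using pos[of z] that by simp
    obtain m d where md: "p - y = m" "p * (1 - y) - (p - y) * z = d"
      by simp
    then have m0: "m \<noteq> 0" "d \<noteq> 0" and d_eq: "d = p * (1 - y) - m * z"
      using d_pos y by auto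
    have denom: "(1 - p) * y * z + p * (1 - y) * (1 - z) = d"
      using md(2) by (simp add: algebra_simps)
    show ?thesis
      unfolding F_def odds_threshold_def
      apply (rule derivative_eq_intros refl | rule d_pos)+
      apply (unfold denom md d_eq[symmetric])
      apply (simp add: field_simps m0)
      apply (simp add: d_eq algebra_simps)
      done
  qed
  have F_diff: "F p - F 0 = odds_threshold_integral p y"
  proof -
    have "p * (1 - y) - (p - y) * p = p * (1 - p)"
      by (simp add: algebra_simps)
    then have at_p: "ln (p * (1 - y) - (p - y) * p) = ln p + ln (1 - p)"
      using p by (simp add: ln_mult)
    have at_0: "ln (p * (1 - y) - (p - y) * 0) = ln p + ln (1 - y)"
      using p y by (simp add: ln_mult)
    obtain m where m: "p - y = m" "m \<noteq> 0"
      using y by simp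
    show ?thesis
      unfolding F_def odds_threshold_integral_def
      unfolding at_p at_0
      unfolding m(1) using m(2)
      by (simp add: field_simps)
  qed
  show ?thesis
    by (rule has_integral_antiderivative[OF _ F_deriv F_diff]) (use p in simp)
qed

lemma dilog_deriv_ratio:
  assumes p: "p < 1" and y: "0 \<le> y" "y < p"
  shows "dilog_deriv ((p - y) / (1 - y)) = (ln (1 - y) - ln (1 - p)) * (1 - y) / (p - y)"
proof -
  have "0 \<le> (p - y) / (1 - y)" "(p - y) / (1 - y) < 1"
    using p y by (auto simp: divide_less_eq)
  note ln_eq = dilog_deriv_eq_ln[OF this]
  have "1 - (p - y) / (1 - y) = (1 - p) / (1 - y)"
    using p y by (simp add: field_simps)
  then have "ln (1 - (p - y) / (1 - y)) = ln (1 - p) - ln (1 - y)"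
    using p y by (simp add: ln_div)
  then have "(p - y) / (1 - y) * dilog_deriv ((p - y) / (1 - y)) = ln (1 - y) - ln (1 - p)"
    using ln_eq by simp
  then show ?thesis
    using p y by (simp add: field_simps)
qed

lemma has_real_derivative_odds_threshold_primitive:
  assumes p: "0 < p" "p < 1" and y: "0 < y" "y < p"
  shows "(odds_threshold_primitive p has_real_derivative odds_threshold_integral p y) (at y)"
proof -
  define K where "K y = - (1 - p) * p * (2 * (p - y) - p * (1 - p) * (ln (1 - y) - ln (1 - p)) / (p - y)
      - p * ln (1 - y) - (1 - y) * (ln (1 - y) - ln (1 - p))
      + (2 * p - 1) * (dilog ((p - y) / (1 - y)) + (ln (1 - y) - ln (1 - p))\<^sup>2 / 2))" for y
  have ratio: "\<bar>(p - y) / (1 - y)\<bar> < 1"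
    using p y by (auto simp: abs_if divide_less_eq)
  (* naming p - y and 1 - y lets field_simps clear the denominators before y, p return *)
  obtain m u where mu: "p - y = m" "1 - y = u"
    by simp
  then have m0: "m \<noteq> 0" "u \<noteq> 0" and yp: "y = 1 - u" "p = 1 - u + m"
    using p y by auto
  have K_deriv: "(K has_real_derivative odds_threshold_integral p y) (at y)"
    unfolding K_def
    apply (rule derivative_eq_intros refl has_real_derivative_dilog_comp | use p y in linarith | rule ratio)+
    unfolding dilog_deriv_ratio[OF p(2) less_imp_le[OF y(1)] y(2)] odds_threshold_integral_def
    unfolding mu
    apply (simp add: field_simps power2_eq_square m0)
    apply (simp add: yp)
    apply (simp add: algebra_simps)
    done
  have K_eq: "K z = odds_threshold_primitive p z" if "z \<in> {0<..<p}" for z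
  proof -
    have "dilog_deriv ((p - z) / (1 - z)) / (1 - z) = (ln (1 - z) - ln (1 - p)) / (p - z)"
      using dilog_deriv_ratio[of p z] that p by simp
    then have "p * (1 - p) * dilog_deriv ((p - z) / (1 - z)) / (1 - z) =
        p * (1 - p) * (ln (1 - z) - ln (1 - p)) / (p - z)"
      by (metis times_divide_eq_right)
    then show ?thesis
      by (simp add: K_def odds_threshold_primitive_def)
  qed
  have "open {0<..<p}" "y \<in> {0<..<p}"
    using y by auto
  from has_field_derivative_transform_within_open[OF K_deriv this K_eq]
  show ?thesis .
qed

lemma continuous_on_odds_threshold_primitive:
  assumes p: "0 < p" "p < 1"
  shows "continuous_on {0..p} (odds_threshold_primitive p)"
proof (intro continuous_at_imp_continuous_on ballI)
  fix y
  assume y: "y \<in> {0..p}"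
  then have ratio: "\<bar>(p - y) / (1 - y)\<bar> < 1" and "0 < 1 - y"
    using p by (auto simp: abs_if divide_less_eq)
  show "isCont (odds_threshold_primitive p) y"
    unfolding odds_threshold_primitive_def[abs_def]
    by (intro continuous_intros
        isCont_o2[where f = "\<lambda>y. (p - y) / (1 - y)", OF _ isCont_dilog_deriv[OF ratio]]
        isCont_o2[where f = "\<lambda>y. (p - y) / (1 - y)", OF _ DERIV_isCont[OF has_real_derivative_dilog[OF ratio]]])
       (use p y \<open>0 < 1 - y\<close> in auto)
qed

lemma odds_threshold_primitive_at_p:
  assumes "p < 1"
  shows "odds_threshold_primitive p p = (1 - p) * p\<^sup>2 * (1 + ln (1 - p))"
  using assms by (simp add: odds_threshold_primitive_def power2_eq_square field_simps)

lemma odds_threshold_primitive_at_0: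
  assumes "0 < p" "p < 1"
  shows "odds_threshold_primitive p 0 = - (1 - p) * p * (2 * p + (2 - p) * ln (1 - p)
      + (2 * p - 1) * (dilog p + (ln (1 - p))\<^sup>2 / 2))"
proof -
  have "dilog_deriv p = - ln (1 - p) / p"
    using dilog_deriv_eq_ln[of p] assms by (simp add: field_simps)
  then show ?thesis
    using assms by (simp add: odds_threshold_primitive_def field_simps power2_eq_square)
qed

lemma Fo_formula:
  assumes p: "0 < p" "p < 1"
  shows "Fo p = p ^ 3 - (1 - p) * p * (3 * p + 2 * ln (1 - p) + (2 * p - 1) * (dilog p + (ln (1 - p))\<^sup>2 / 2))"
proof -
  have outer: "(odds_threshold_integral p has_integral
      odds_threshold_primitive p p - odds_threshold_primitive p 0) {0..p}"
    using p continuous_on_odds_threshold_primitive[OF p] has_real_derivative_odds_threshold_primitive[OF p]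
    by (intro fundamental_theorem_of_calculus_interior)
       (auto simp: has_real_derivative_iff_has_vector_derivative[symmetric])
  have "measure lebesgue (Fo_set p) = p ^ 3 - (odds_threshold_primitive p p - odds_threshold_primitive p 0)"
  proof (rule measure_lebesgue_by_interval_sections[where l = "odds_threshold p" and u = "\<lambda>_ _. p"
        and G = "\<lambda>y. p\<^sup>2 - odds_threshold_integral p y"])
    show "Fo_set p \<in> sets borel"
      unfolding Fo_set_def cube_def by (rule sets_borel_Collect_triple) measurable
  next
    fix y z :: real
    assume "y \<in> {0<..<p}" "z \<in> {0<..<p}"
    with odds_threshold_bounds[OF p, of y z]
    show "odds_threshold p y z \<le> p \<and> {odds_threshold p y z<..<p} \<subseteq> {x. (x, y, z) \<in> Fo_set p} \<and>
        {x. (x, y, z) \<in> Fo_set p} \<subseteq> {odds_threshold p y z..p}"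
      by (auto simp: Fo_set_def cube_def odds_threshold_def)
  next
    fix y :: real
    assume "y \<in> {0<..<p}"
    then show "((\<lambda>z. p - odds_threshold p y z) has_integral p\<^sup>2 - odds_threshold_integral p y) {0..p}"
      using has_integral_diff[OF has_integral_const_real has_integral_odds_threshold[OF p]] p
      by (simp add: power2_eq_square)
  next
    show "((\<lambda>y. p\<^sup>2 - odds_threshold_integral p y) has_integral
        p ^ 3 - (odds_threshold_primitive p p - odds_threshold_primitive p 0)) {0..p}"
      using has_integral_diff[OF has_integral_const_real[of "p\<^sup>2" 0 p] outer] p
      by (simp add: power2_eq_square power3_eq_cube mult.assoc)
  qed (auto simp: Fo_set_def cube_def)
  moreover have "odds_threshold_primitive p p - odds_threshold_primitive p 0 =
      (1 - p) * p * (3 * p + 2 * ln (1 - p) + (2 * p - 1) * (dilog p + (ln (1 - p))\<^sup>2 / 2))"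
    using p by (simp add: odds_threshold_primitive_at_p odds_threshold_primitive_at_0
        power2_eq_square field_simps)
  ultimately show ?thesis
    by (simp add: Fo_def)
qed

(* S stands for ln(1 - p)^2: once p and the bounds are numerals, the premise is a linear
   problem. *)
lemma rounds_to_Fo_div_cube:
  assumes p: "0 < p" "p < 1"
    and L: "a \<le> ln (1 - p)" "ln (1 - p) \<le> b" "b \<le> 0"
    and D: "c \<le> dilog p" "dilog p \<le> d"
    and enclosure: "\<And>L S D. a \<le> L \<Longrightarrow> L \<le> b \<Longrightarrow> b\<^sup>2 \<le> S \<Longrightarrow> S \<le> a\<^sup>2 \<Longrightarrow> c \<le> D \<Longrightarrow> D \<le> d \<Longrightarrow>
      of_int k - 1/2 < 100 * (1 - (1 - p) / p\<^sup>2 * (3 * p + 2 * L + (2 * p - 1) * (D + S / 2))) \<and>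
      100 * (1 - (1 - p) / p\<^sup>2 * (3 * p + 2 * L + (2 * p - 1) * (D + S / 2))) < of_int k + 1/2"
  shows "rounds_to (Fo p / p ^ 3) k"
proof -
  have "b\<^sup>2 \<le> (ln (1 - p))\<^sup>2" "(ln (1 - p))\<^sup>2 \<le> a\<^sup>2"
    using power_mono[of "- b" "- ln (1 - p)" 2] power_mono[of "- ln (1 - p)" "- a" 2] L by auto
  note value_bounds = enclosure[OF L(1,2) this D]
  have "Fo p / p ^ 3 =
      1 - (1 - p) / p\<^sup>2 * (3 * p + 2 * ln (1 - p) + (2 * p - 1) * (dilog p + (ln (1 - p))\<^sup>2 / 2))"
    using p by (simp add: Fo_formula power2_eq_square power3_eq_cube field_simps)
  with value_bounds show ?thesis
    unfolding rounds_to_def by (intro round_unique) auto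
qed

(* The series for ln(1 - x) converges too slowly at x = 0.9, so ln(1/10) is assembled from
   ln(1/2) and ln(4/5). *)
lemma ln_one_tenth_bounds:
  shows "- 2.302585099 \<le> ln (1 - 0.9 :: real)" "ln (1 - 0.9 :: real) \<le> - 2.30258496"
proof -
  have "ln (1 - 0.9 :: real) = ln ((1/2) ^ 3 * (4/5))"
    by (simp add: eval_nat_numeral)
  also have "\<dots> = ln ((1/2) ^ 3) + ln (4/5)"
    by (rule ln_mult_pos) simp_all
  also have "ln ((1/2 :: real) ^ 3) = 3 * ln (1/2)"
    using ln_realpow[of "1/2 :: real" 3] by simp
  finally show "- 2.302585099 \<le> ln (1 - 0.9 :: real)" "ln (1 - 0.9 :: real) \<le> - 2.30258496"
    using ln_one_minus_bounds[of "1/2" 20] ln_one_minus_bounds[of "1/5" 20]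
    by (simp_all add: eval_nat_numeral)
qed

lemma Fo_rounded_values:
  shows "rounds_to (Fo 0.1 / 0.1 ^ 3) 75"
    and "rounds_to (Fo 0.2 / 0.2 ^ 3) 76"
    and "rounds_to (Fo 0.3 / 0.3 ^ 3) 76"
    and "rounds_to (Fo 0.4 / 0.4 ^ 3) 77"
    and "rounds_to (Fo 0.5 / 0.5 ^ 3) 77"
    and "rounds_to (Fo 0.6 / 0.6 ^ 3) 78"
    and "rounds_to (Fo 0.7 / 0.7 ^ 3) 79"
    and "rounds_to (Fo 0.8 / 0.8 ^ 3) 81"
    and "rounds_to (Fo 0.9 / 0.9 ^ 3) 85"
proof -
  show "rounds_to (Fo 0.1 / 0.1 ^ 3) 75"
    by (rule rounds_to_Fo_div_cube[OF _ _ ln_one_minus_bounds[of _ 12] _ dilog_bounds[of _ 10]])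
       (simp_all add: eval_nat_numeral, argo)
  show "rounds_to (Fo 0.2 / 0.2 ^ 3) 76"
    by (rule rounds_to_Fo_div_cube[OF _ _ ln_one_minus_bounds[of _ 12] _ dilog_bounds[of _ 10]])
       (simp_all add: eval_nat_numeral, argo)
  show "rounds_to (Fo 0.3 / 0.3 ^ 3) 76"
    by (rule rounds_to_Fo_div_cube[OF _ _ ln_one_minus_bounds[of _ 14] _ dilog_bounds[of _ 12]])
       (simp_all add: eval_nat_numeral, argo)
  show "rounds_to (Fo 0.4 / 0.4 ^ 3) 77"
    by (rule rounds_to_Fo_div_cube[OF _ _ ln_one_minus_bounds[of _ 16] _ dilog_bounds[of _ 14]])
       (simp_all add: eval_nat_numeral, argo)
  show "rounds_to (Fo 0.5 / 0.5 ^ 3) 77"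
    by (rule rounds_to_Fo_div_cube[OF _ _ ln_one_minus_bounds[of _ 18] _ dilog_bounds[of _ 16]])
       (simp_all add: eval_nat_numeral)
  show "rounds_to (Fo 0.6 / 0.6 ^ 3) 78"
    by (rule rounds_to_Fo_div_cube[OF _ _ ln_one_minus_bounds[of _ 20] _ dilog_bounds[of _ 20]])
       (simp_all add: eval_nat_numeral, argo)
  show "rounds_to (Fo 0.7 / 0.7 ^ 3) 79"
    by (rule rounds_to_Fo_div_cube[OF _ _ ln_one_minus_bounds[of _ 24] _ dilog_bounds[of _ 24]])
       (simp_all add: eval_nat_numeral, argo)
  show "rounds_to (Fo 0.8 / 0.8 ^ 3) 81"
    by (rule rounds_to_Fo_div_cube[OF _ _ ln_one_minus_bounds[of _ 30] _ dilog_bounds[of _ 30]])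
       (simp_all add: eval_nat_numeral, argo)
  show "rounds_to (Fo 0.9 / 0.9 ^ 3) 85"
    by (rule rounds_to_Fo_div_cube[OF _ _ ln_one_tenth_bounds _ dilog_bounds[of _ 30]])
       (simp_all add: eval_nat_numeral, argo)
qed

theorem theorem1:
  shows "(\<forall>p::real. 0 < p \<and> p \<le> 1 \<longrightarrow> Fa p = 2 / 3 * p ^ 3)
    \<and> (\<forall>p::real. 0 < p \<and> p \<le> 1 \<longrightarrow> Fm p = 3 / 4 * p ^ 3)
    \<and> rounds_to (Fo 0.1 / 0.1 ^ 3) 75
    \<and> rounds_to (Fo 0.2 / 0.2 ^ 3) 76
    \<and> rounds_to (Fo 0.3 / 0.3 ^ 3) 76
    \<and> rounds_to (Fo 0.4 / 0.4 ^ 3) 77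
    \<and> rounds_to (Fo 0.5 / 0.5 ^ 3) 77
    \<and> rounds_to (Fo 0.6 / 0.6 ^ 3) 78
    \<and> rounds_to (Fo 0.7 / 0.7 ^ 3) 79
    \<and> rounds_to (Fo 0.8 / 0.8 ^ 3) 81
    \<and> rounds_to (Fo 0.9 / 0.9 ^ 3) 85
    \<and> rounds_to (Fo 1 / 1 ^ 3) 100"
proof -
  have "rounds_to (Fo 1 / 1 ^ 3) 100"
    by (simp add: Fo_1 rounds_to_def)
  then show ?thesis
    using Fa_formula Fm_formula Fo_rounded_values by blast
qed

end
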